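(* In the power-splitting setting described in the context, let $X_k>0$, $Y_k\ge0$ and $\lambda_k\ge0$. For a nonzero real $\theta$, say the system $S(\theta)$ is feasible if there exist $(\boldsymbol\rho,\mathbf{p},\mathbf{w}_{\mathrm{p}})$ satisfying (F) together with $\sum_n|y_n|^2\ge\lambda_kY_k$, $\sum_nx_n^2|g_n|^2\ge\lambda_kX_k$, and $\theta\,\mathbf{x}\circ\mathbf{g}=\mathbf{y}$. If $S(\theta)$ is feasible for some nonzero real $\theta$, then $S(\theta_k)$ is feasible for $\theta_k=\sqrt{Y_k/X_k}$; that is, the coefficient in the system can be set to $\theta_k=\sqrt{Y_k/X_k}$.
   Context: An access point (HAP) with $K$ antennas and fixed normalized transmit power $p_{\mathrm{o}}>0$ serves $N$ single-antenna relays $\mathcal{N}=\{1,\dots,N\}$ sharing spectrum with $M$ cellular users $\mathcal{C}=\{1,\dots,M\}$. $\mathbf{f}_n\in\mathbb{C}^K$ is the HAP-to-relay-$n$ channel, $\mathbf{g}\in\mathbb{C}^N$ the relays-to-receiver channel, $\eta\in(0,1]$ the energy conversion efficiency. Variables: HAP beamformer $\mathbf{w}_{\mathrm{p}}\in\mathbb{C}^K$ with $\mathbf{W}_{\mathrm{p}}=\mathbf{w}_{\mathrm{p}}\mathbf{w}_{\mathrm{p}}^H$, PS ratios $\boldsymbol\rho\in[0,1]^N$, relay powers $\mathbf{p}\in\mathbb{R}^N_{\ge0}$; $y_n=\sqrt{(1-\rho_n)p_{\mathrm{o}}}\,\mathbf{f}_n^H\mathbf{w}_{\mathrm{p}}$,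 $x_n=\big(p_n/((1-\rho_n)p_{\mathrm{o}}\mathbf{f}_n^H\mathbf{W}_{\mathrm{p}}\mathbf{f}_n+1)\big)^{1/2}$, $\circ$ the entrywise product. Constraints (F): (i) for each $m\in\mathcal{C}$, $\sup_{\mathbb{P}\in\mathcal{P}_m}\mathbb{P}\big(\sum_n|z_{nm}|^2p_n\ge\bar\phi_m\big)\le\zeta$, where $\mathcal{P}_m$ is the set of all distributions of the random channel $\mathbf{z}_m\in\mathbb{C}^N$ (relays to user $m$) with prescribed first- and second-order moments, $\bar\phi_m>0$, $\zeta\in(0,1)$; (ii) $p_n\le\eta p_{\mathrm{o}}\rho_n\mathbf{f}_n^H\mathbf{W}_{\mathrm{p}}\mathbf{f}_n$ for all $n$; (iii) $0\le\rho_n\le1$, $\mathbf{p}\succeq\mathbf{0}$, $\mathrm{Tr}(\mathbf{W}_{\mathrm{p}})\le1$. *)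

theory Defs
  imports "HOL-Probability.Probability"
begin

definition hinner :: "complex^'k \<Rightarrow> complex^'k \<Rightarrow> complex" where
  "hinner a b = (\<Sum>i\<in>UNIV. cnj (a$i) * b$i)"

text \<open>Ambiguity set: all probability distributions of a random vector z in C^N
  (Borel measures on C^N) with prescribed mean mu and prescribed second-order
  moment matrix E[z z^H] = S.\<close>
definition moment_set :: "complex^'n \<Rightarrow> complex^'n^'n \<Rightarrow> (complex^'n) measure set" where
  "moment_set mu S = {P. prob_space P \<and> sets P = sets borel \<and>
     (\<forall>i. integrable P (\<lambda>z. z$i) \<and> (\<integral>z. z$i \<partial>P) = mu$i) \<and>
     (\<forall>i j. integrable P (\<lambda>z. z$i * cnj (z$j)) \<and> (\<integral>z. z$i * cnj (z$j) \<partial>P) = S$i$j)}"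

definition ysig :: "real \<Rightarrow> ('n \<Rightarrow> complex^'k) \<Rightarrow> complex^'k \<Rightarrow> ('n \<Rightarrow> real) \<Rightarrow> 'n \<Rightarrow> complex" where
  "ysig po f w rho n = complex_of_real (sqrt ((1 - rho n) * po)) * hinner (f n) w"

text \<open>Amplification coefficient x_n at relay n (f_n^H W_p f_n = |f_n^H w_p|^2).\<close>
definition xamp :: "real \<Rightarrow> ('n \<Rightarrow> complex^'k) \<Rightarrow> complex^'k \<Rightarrow> ('n \<Rightarrow> real) \<Rightarrow> ('n \<Rightarrow> real) \<Rightarrow> 'n \<Rightarrow> real" where
  "xamp po f w rho p n = sqrt (p n / ((1 - rho n) * po * (cmod (hinner (f n) w))\<^sup>2 + 1))"

definition feasF ::
  "real \<Rightarrow> real \<Rightarrow> ('n \<Rightarrow> complex^'k) \<Rightarrow> ('m \<Rightarrow> complex^'n) \<Rightarrow> ('m \<Rightarrow> complex^'n^'n)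
   \<Rightarrow> ('m \<Rightarrow> real) \<Rightarrow> real \<Rightarrow> complex^'k \<Rightarrow> ('n \<Rightarrow> real) \<Rightarrow> ('n \<Rightarrow> real) \<Rightarrow> bool" where
  "feasF po eta f mu S phi zeta w rho p \<longleftrightarrow>
     (\<forall>m. \<forall>P\<in>moment_set (mu m) (S m).
         measure P {z. (\<Sum>n\<in>UNIV. (cmod (z$n))\<^sup>2 * p n) \<ge> phi m} \<le> zeta) \<and>
     (\<forall>n. p n \<le> eta * po * rho n * (cmod (hinner (f n) w))\<^sup>2) \<and>
     (\<forall>n. 0 \<le> rho n \<and> rho n \<le> 1) \<and> (\<forall>n. 0 \<le> p n) \<and>
     (\<Sum>i\<in>UNIV. (cmod (w$i))\<^sup>2) \<le> 1"

definition sysS ::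
  "real \<Rightarrow> real \<Rightarrow> ('n \<Rightarrow> complex^'k) \<Rightarrow> complex^'n \<Rightarrow> ('m \<Rightarrow> complex^'n) \<Rightarrow> ('m \<Rightarrow> complex^'n^'n)
   \<Rightarrow> ('m \<Rightarrow> real) \<Rightarrow> real \<Rightarrow> real \<Rightarrow> real \<Rightarrow> real \<Rightarrow> real \<Rightarrow> bool" where
  "sysS po eta f g mu S phi zeta X Y lam theta \<longleftrightarrow>
     (\<exists>rho p w. feasF po eta f mu S phi zeta w rho p \<and>
        (\<Sum>n\<in>UNIV. (cmod (ysig po f w rho n))\<^sup>2) \<ge> lam * Y \<and>
        (\<Sum>n\<in>UNIV. (xamp po f w rho p n)\<^sup>2 * (cmod (g$n))\<^sup>2) \<ge> lam * X \<and>
        (\<forall>n. complex_of_real (theta * xamp po f w rho p n) * g$n = ysig po f w rho n))"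

end

theory Submission
  imports Defs
begin

text \<open>
  The coefficient \<open>\<theta>\<close> of \<open>S(\<theta>)\<close> is the common ratio \<open>y\<^sub>n / (x\<^sub>n g\<^sub>n)\<close>, and it can be moved
  freely at the level of a single feasible point. Raising the splitting ratios to
  \<open>1 - a\<^sup>2 (1 - \<rho>\<^sub>n)\<close> scales every \<open>y\<^sub>n\<close> by \<open>a \<in> [0,1]\<close>, while the relay powers can be
  lowered so that every \<open>x\<^sub>n\<close> is scaled by any prescribed \<open>b \<in> [0,1]\<close>. Lower powers and larger
  splitting ratios keep (F) valid: the distributionally robust chance constraints are
  monotone in \<open>p\<close>, and more power is harvested. Since \<open>\<Sum>|y\<^sub>n|\<^sup>2 = \<theta>\<^sup>2 \<Sum>x\<^sub>n\<^sup>2|g\<^sub>n|\<^sup>2\<close>, shrinking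
  \<open>y\<close> lowers \<open>\<theta>\<close> to any \<open>\<theta>\<^sub>k \<le> \<theta>\<close> and shrinking \<open>x\<close> raises it to any \<open>\<theta>\<^sub>k \<ge> \<theta>\<close>, and for
  \<open>\<theta>\<^sub>k\<^sup>2 = Y\<^sub>k / X\<^sub>k\<close> both power constraints survive. Replacing \<open>w\<^sub>p\<close> by \<open>-w\<^sub>p\<close> flips the sign of
  \<open>\<theta>\<close>, so a positive \<open>\<theta>\<close> may be assumed.
\<close>

lemma hinner_uminus_right: "hinner a (- b) = - hinner a b"
  unfolding hinner_def by (simp add: sum_negf)

lemma ysig_uminus_beam: "ysig po f (- w) rho n = - ysig po f w rho n"
  unfolding ysig_def hinner_uminus_right by simp

lemma xamp_uminus_beam: "xamp po f (- w) rho p n = xamp po f w rho p n"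
  unfolding xamp_def hinner_uminus_right by simp

lemma feasF_uminus_beam:
  "feasF po eta f mu S phi zeta (- w) rho p \<longleftrightarrow> feasF po eta f mu S phi zeta w rho p"
  unfolding feasF_def hinner_uminus_right by simp

lemma sysS_uminus:
  assumes "sysS po eta f g mu S phi zeta X Y lam theta"
  shows "sysS po eta f g mu S phi zeta X Y lam (- theta)"
proof -
  obtain rho p w where "feasF po eta f mu S phi zeta w rho p"
    and "lam * Y \<le> (\<Sum>n\<in>UNIV. (cmod (ysig po f w rho n))\<^sup>2)"
    and "lam * X \<le> (\<Sum>n\<in>UNIV. (xamp po f w rho p n)\<^sup>2 * (cmod (g$n))\<^sup>2)"
    and "\<forall>n. complex_of_real (theta * xamp po f w rho p n) * g$n = ysig po f w rho n"
    using assms unfolding sysS_def by blast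
  then show ?thesis
    unfolding sysS_def
    by (intro exI[of _ rho] exI[of _ p] exI[of _ "- w"])
       (simp add: feasF_uminus_beam ysig_uminus_beam xamp_uminus_beam)
qed

lemma measure_weighted_norm_ge_mono:
  fixes p p' :: "'n::finite \<Rightarrow> real" and P :: "(complex^'n) measure"
  assumes "finite_measure P" and "sets P = sets borel" and "\<And>n. p' n \<le> p n"
  shows "measure P {z. c \<le> (\<Sum>n\<in>UNIV. (cmod (z$n))\<^sup>2 * p' n)}
       \<le> measure P {z. c \<le> (\<Sum>n\<in>UNIV. (cmod (z$n))\<^sup>2 * p n)}"
proof (rule finite_measure.finite_measure_mono[OF assms(1)])
  have "closed {z::complex^'n. c \<le> (\<Sum>n\<in>UNIV. (cmod (z$n))\<^sup>2 * p n)}"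
    by (intro closed_Collect_le continuous_intros)
  then show "{z. c \<le> (\<Sum>n\<in>UNIV. (cmod (z$n))\<^sup>2 * p n)} \<in> sets P"
    using assms(2) by simp
  show "{z. c \<le> (\<Sum>n\<in>UNIV. (cmod (z$n))\<^sup>2 * p' n)} \<subseteq> {z. c \<le> (\<Sum>n\<in>UNIV. (cmod (z$n))\<^sup>2 * p n)}"
  proof
    fix z :: "complex^'n"
    have "(\<Sum>n\<in>UNIV. (cmod (z$n))\<^sup>2 * p' n) \<le> (\<Sum>n\<in>UNIV. (cmod (z$n))\<^sup>2 * p n)"
      by (intro sum_mono mult_left_mono assms(3)) simp
    then show "z \<in> {z. c \<le> (\<Sum>n\<in>UNIV. (cmod (z$n))\<^sup>2 * p' n)} \<Longrightarrow>
               z \<in> {z. c \<le> (\<Sum>n\<in>UNIV. (cmod (z$n))\<^sup>2 * p n)}"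
      by simp
  qed
qed

lemma feasF_lower_power_higher_split:
  assumes F: "feasF po eta f mu S phi zeta w rho p" and "0 \<le> eta * po"
    and p': "\<And>n. 0 \<le> p' n \<and> p' n \<le> p n" and rho': "\<And>n. rho n \<le> rho' n \<and> rho' n \<le> 1"
  shows "feasF po eta f mu S phi zeta w rho' p'"
proof -
  have "p' n \<le> eta * po * rho' n * (cmod (hinner (f n) w))\<^sup>2" for n
  proof -
    have "p' n \<le> eta * po * rho n * (cmod (hinner (f n) w))\<^sup>2"
      using F p'[of n] unfolding feasF_def by (meson order_trans)
    also have "\<dots> \<le> eta * po * rho' n * (cmod (hinner (f n) w))\<^sup>2"
      using rho'[of n] \<open>0 \<le> eta * po\<close> by (intro mult_right_mono mult_left_mono) auto
    finally show ?thesis .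
  qed
  moreover have "measure P {z. phi m \<le> (\<Sum>n\<in>UNIV. (cmod (z$n))\<^sup>2 * p' n)} \<le> zeta"
    if "P \<in> moment_set (mu m) (S m)" for m P
  proof -
    have "finite_measure P" and "sets P = sets borel"
      using that unfolding moment_set_def prob_space_def by auto
    then have "measure P {z. phi m \<le> (\<Sum>n\<in>UNIV. (cmod (z$n))\<^sup>2 * p' n)}
             \<le> measure P {z. phi m \<le> (\<Sum>n\<in>UNIV. (cmod (z$n))\<^sup>2 * p n)}"
      using p' by (intro measure_weighted_norm_ge_mono) auto
    also have "\<dots> \<le> zeta"
      using F that unfolding feasF_def by blast
    finally show ?thesis .
  qed
  moreover have "0 \<le> rho' n" for n
    using F rho'[of n] unfolding feasF_def by (meson order_trans)
  ultimately show ?thesis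
    using F p' rho' unfolding feasF_def by blast
qed

lemma feasF_rescale:
  assumes F: "feasF po eta f mu S phi zeta w rho p" and "0 \<le> po" and "0 \<le> eta"
    and a: "0 \<le> a" "a \<le> 1" and b: "0 \<le> b" "b \<le> 1"
  obtains rho' p' where "feasF po eta f mu S phi zeta w rho' p'"
    and "\<And>n. ysig po f w rho' n = complex_of_real a * ysig po f w rho n"
    and "\<And>n. xamp po f w rho' p' n = b * xamp po f w rho p n"
proof
  define A where "A n = (1 - rho n) * po * (cmod (hinner (f n) w))\<^sup>2" for n
  define rho' where "rho' n = 1 - a\<^sup>2 * (1 - rho n)" for n
  define p' where "p' n = b\<^sup>2 * p n * (a\<^sup>2 * A n + 1) / (A n + 1)" for n
  have rho: "0 \<le> rho n" "rho n \<le> 1" and p: "0 \<le> p n" for n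
    using F unfolding feasF_def by auto
  have A: "0 \<le> A n" for n
    unfolding A_def using rho(2) \<open>0 \<le> po\<close> by simp
  have A': "(1 - rho' n) * po * (cmod (hinner (f n) w))\<^sup>2 = a\<^sup>2 * A n" for n
    unfolding rho'_def A_def by simp
  have "a\<^sup>2 \<le> 1" and "b\<^sup>2 \<le> 1"
    using a b by (simp_all add: power_le_one)
  have "p' n \<le> p n" for n
  proof -
    have "b\<^sup>2 * (a\<^sup>2 * A n + 1) \<le> 1 * (A n + 1)"
      using A[of n] \<open>a\<^sup>2 \<le> 1\<close> \<open>b\<^sup>2 \<le> 1\<close>
      by (intro mult_mono add_right_mono mult_left_le_one_le) auto
    then have "p n * (b\<^sup>2 * (a\<^sup>2 * A n + 1)) \<le> p n * (A n + 1)"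
      using p[of n] by (intro mult_left_mono) auto
    then show ?thesis
      unfolding p'_def using A[of n] by (simp add: divide_le_eq ac_simps)
  qed
  moreover have "0 \<le> p' n" for n
    unfolding p'_def using p[of n] A[of n] by simp
  moreover have "rho n \<le> rho' n \<and> rho' n \<le> 1" for n
  proof -
    have "a\<^sup>2 * (1 - rho n) \<le> 1 - rho n"
      using rho[of n] \<open>a\<^sup>2 \<le> 1\<close> by (intro mult_left_le_one_le) auto
    then show ?thesis
      unfolding rho'_def using rho[of n] by simp
  qed
  ultimately show "feasF po eta f mu S phi zeta w rho' p'"
    using \<open>0 \<le> po\<close> \<open>0 \<le> eta\<close> by (intro feasF_lower_power_higher_split[OF F]) auto
  show "ysig po f w rho' n = complex_of_real a * ysig po f w rho n" for n
    unfolding ysig_def rho'_def using a by (simp add: real_sqrt_mult)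
  show "xamp po f w rho' p' n = b * xamp po f w rho p n" for n
  proof -
    have "0 < a\<^sup>2 * A n + 1"
      using A[of n] by (simp add: add_nonneg_pos)
    then have "p' n / (a\<^sup>2 * A n + 1) = b\<^sup>2 * (p n / (A n + 1))"
      unfolding p'_def by simp
    then show ?thesis
      unfolding xamp_def A' A_def using b
      by (simp add: real_sqrt_mult del: times_divide_eq_right)
  qed
qed

lemma sum_cmod_sq_of_proportional:
  fixes x :: "'n::finite \<Rightarrow> real" and y :: "'n \<Rightarrow> complex"
  assumes "\<And>n. complex_of_real (theta * x n) * g$n = y n"
  shows "(\<Sum>n\<in>UNIV. (cmod (y n))\<^sup>2) = theta\<^sup>2 * (\<Sum>n\<in>UNIV. (x n)\<^sup>2 * (cmod (g$n))\<^sup>2)"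
  unfolding assms[symmetric] norm_mult norm_of_real
  by (simp add: sum_distrib_left power_mult_distrib ac_simps)

lemma sysS_iff_amplifier_power:
  "sysS po eta f g mu S phi zeta X Y lam theta \<longleftrightarrow>
    (\<exists>rho p w. feasF po eta f mu S phi zeta w rho p \<and>
       lam * Y \<le> theta\<^sup>2 * (\<Sum>n\<in>UNIV. (xamp po f w rho p n)\<^sup>2 * (cmod (g$n))\<^sup>2) \<and>
       lam * X \<le> (\<Sum>n\<in>UNIV. (xamp po f w rho p n)\<^sup>2 * (cmod (g$n))\<^sup>2) \<and>
       (\<forall>n. complex_of_real (theta * xamp po f w rho p n) * g$n = ysig po f w rho n))"
proof -
  have power: "(\<Sum>n\<in>UNIV. (cmod (ysig po f w rho n))\<^sup>2)
      = theta\<^sup>2 * (\<Sum>n\<in>UNIV. (xamp po f w rho p n)\<^sup>2 * (cmod (g$n))\<^sup>2)"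
    if "\<forall>n. complex_of_real (theta * xamp po f w rho p n) * g$n = ysig po f w rho n" for rho p w
    using that by (intro sum_cmod_sq_of_proportional) blast
  show ?thesis
    unfolding sysS_def by (intro ex_cong1 iffI; elim conjE; simp add: power)
qed

lemma sysS_decrease_coefficient:
  assumes "sysS po eta f g mu S phi zeta X Y lam theta"
    and "0 \<le> po" and "0 \<le> eta" and "0 \<le> lam"
    and "0 \<le> t" and "t \<le> theta" and "Y \<le> t\<^sup>2 * X"
  shows "sysS po eta f g mu S phi zeta X Y lam t"
proof -
  obtain rho p w where F: "feasF po eta f mu S phi zeta w rho p"
    and X: "lam * X \<le> (\<Sum>n\<in>UNIV. (xamp po f w rho p n)\<^sup>2 * (cmod (g$n))\<^sup>2)"
    and ratio: "\<And>n. complex_of_real (theta * xamp po f w rho p n) * g$n = ysig po f w rho n"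
    using assms(1) unfolding sysS_iff_amplifier_power by blast
  have "0 \<le> t / theta" and "t / theta \<le> 1"
    using assms(5,6) by (auto simp: divide_le_eq)
  then obtain rho' p' where F': "feasF po eta f mu S phi zeta w rho' p'"
    and y': "\<And>n. ysig po f w rho' n = complex_of_real (t / theta) * ysig po f w rho n"
    and x': "\<And>n. xamp po f w rho' p' n = 1 * xamp po f w rho p n"
    using feasF_rescale[OF F assms(2,3)] by (metis order_refl zero_le_one)
  have "t / theta * theta = t"
    using assms(5,6) by (cases "theta = 0") auto
  moreover have "ysig po f w rho' n
      = complex_of_real (t / theta * theta * xamp po f w rho p n) * g$n" for n
    unfolding y' ratio[symmetric] of_real_mult by (simp only: mult.assoc)
  ultimately have ratio': "complex_of_real (t * xamp po f w rho' p' n) * g$n = ysig po f w rho' n"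
    for n
    unfolding x' by simp
  have "lam * Y \<le> lam * (t\<^sup>2 * X)"
    using assms(7,4) by (rule mult_left_mono)
  also have "\<dots> \<le> t\<^sup>2 * (\<Sum>n\<in>UNIV. (xamp po f w rho p n)\<^sup>2 * (cmod (g$n))\<^sup>2)"
    using mult_left_mono[OF X, of "t\<^sup>2"] by (simp add: mult.left_commute)
  finally have "lam * Y \<le> t\<^sup>2 * (\<Sum>n\<in>UNIV. (xamp po f w rho' p' n)\<^sup>2 * (cmod (g$n))\<^sup>2)"
    unfolding x' by simp
  moreover have "lam * X \<le> (\<Sum>n\<in>UNIV. (xamp po f w rho' p' n)\<^sup>2 * (cmod (g$n))\<^sup>2)"
    unfolding x' using X by simp
  ultimately show ?thesis
    unfolding sysS_iff_amplifier_power using F' ratio' by blast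
qed

lemma sysS_increase_coefficient:
  assumes "sysS po eta f g mu S phi zeta X Y lam theta"
    and "0 \<le> po" and "0 \<le> eta" and "0 \<le> lam"
    and "0 < theta" and "theta \<le> t" and "t\<^sup>2 * X \<le> Y"
  shows "sysS po eta f g mu S phi zeta X Y lam t"
proof -
  obtain rho p w where F: "feasF po eta f mu S phi zeta w rho p"
    and Y: "lam * Y \<le> theta\<^sup>2 * (\<Sum>n\<in>UNIV. (xamp po f w rho p n)\<^sup>2 * (cmod (g$n))\<^sup>2)"
    and ratio: "\<And>n. complex_of_real (theta * xamp po f w rho p n) * g$n = ysig po f w rho n"
    using assms(1) unfolding sysS_iff_amplifier_power by blast
  define B where "B = (\<Sum>n\<in>UNIV. (xamp po f w rho p n)\<^sup>2 * (cmod (g$n))\<^sup>2)"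
  have "0 < t"
    using assms(5,6) by simp
  then have "0 \<le> theta / t" and "theta / t \<le> 1"
    using assms(5,6) by auto
  then obtain rho' p' where F': "feasF po eta f mu S phi zeta w rho' p'"
    and y': "\<And>n. ysig po f w rho' n = complex_of_real 1 * ysig po f w rho n"
    and x': "\<And>n. xamp po f w rho' p' n = theta / t * xamp po f w rho p n"
    using feasF_rescale[OF F assms(2,3)] by (metis order_refl zero_le_one)
  have ratio': "complex_of_real (t * xamp po f w rho' p' n) * g$n = ysig po f w rho' n" for n
    unfolding x' y' ratio[symmetric] using \<open>0 < t\<close> by simp
  have B': "(\<Sum>n\<in>UNIV. (xamp po f w rho' p' n)\<^sup>2 * (cmod (g$n))\<^sup>2) = (theta / t)\<^sup>2 * B"
    unfolding x' B_def power_mult_distrib sum_distrib_left by (simp only: mult.assoc)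
  have "lam * X * t\<^sup>2 \<le> lam * Y"
    using mult_left_mono[OF assms(7,4)] by (simp add: ac_simps)
  also have "\<dots> \<le> theta\<^sup>2 * B"
    using Y unfolding B_def .
  finally have "lam * X \<le> (theta / t)\<^sup>2 * B"
    using \<open>0 < t\<close> by (simp add: power_divide pos_le_divide_eq mult.commute)
  moreover have "lam * Y \<le> t\<^sup>2 * ((theta / t)\<^sup>2 * B)"
    using Y \<open>0 < t\<close> by (simp add: power_divide B_def)
  ultimately show ?thesis
    unfolding sysS_iff_amplifier_power B'[symmetric] using F' ratio' by blast
qed

theorem proposition6:
  fixes po eta zeta X Y lam :: real
    and f :: "'n::finite \<Rightarrow> complex^'k::finite"
    and g :: "complex^'n"
    and mu :: "'m::finite \<Rightarrow> complex^'n"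
    and S :: "'m \<Rightarrow> complex^'n^'n"
    and phi :: "'m \<Rightarrow> real"
  assumes "po > 0" and "0 < eta" and "eta \<le> 1"
    and "\<forall>m. phi m > 0" and "0 < zeta" and "zeta < 1"
    and "X > 0" and "Y \<ge> 0" and "lam \<ge> 0"
    and "\<exists>theta::real. theta \<noteq> 0 \<and> sysS po eta f g mu S phi zeta X Y lam theta"
  shows "sysS po eta f g mu S phi zeta X Y lam (sqrt (Y / X))"
proof -
  obtain theta where "0 < theta" and feasible: "sysS po eta f g mu S phi zeta X Y lam theta"
    using assms(10) sysS_uminus by (metis neg_0_less_iff_less linorder_neqE_linordered_idom)
  have coefficient: "(sqrt (Y / X))\<^sup>2 * X = Y"
    using assms(7,8) by simp
  show ?thesis
  proof (cases "sqrt (Y / X) \<le> theta")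
    case True
    then show ?thesis
      using assms(1,2,7,8,9) coefficient by (intro sysS_decrease_coefficient[OF feasible]) auto
  next
    case False
    then show ?thesis
      using assms(1,2,9) coefficient \<open>0 < theta\<close>
      by (intro sysS_increase_coefficient[OF feasible]) auto
  qed
qed

end
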